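(* Let $E_{i,j}$ ($i,j\in\mathbb N$) be the standard matrix units in $B(\ell^2(\mathbb N))$, let $\mathcal K_0$ be the norm closed linear span of $\{E_{i,j}:(i,j)\neq(1,1)\}$, and let $\mathcal S_0=\{\lambda I+K_0:\lambda\in\mathbb C,\ K_0\in\mathcal K_0\}\subseteq B(\ell^2(\mathbb N))$ with the operator system structure inherited from $B(\ell^2(\mathbb N))$. Then $\mathcal S_0$ (which is a nuclear operator system) is not unitally completely order isomorphic to any unital $C^*$-algebra.
   Context: An operator system $\mathcal S$ is nuclear if $\mathcal S\otimes_{\min}\mathcal T=\mathcal S\otimes_{\max}\mathcal T$ for every operator system $\mathcal T$, where $\min$ and $\max$ denote the minimal and maximal operator system tensor products (in the sense of Kavruk–Paulsen–Todorov–Tomforde). *)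

theory Defs
  imports Complex_Main
begin

text \<open>Operators are represented extensionally: they map l2 into l2 and send
  every non-l2 function to 0, so that equality of functions is equality of operators.\<close>

definition l2 :: "(nat \<Rightarrow> complex) set" where
  "l2 = {f. summable (\<lambda>n. (cmod (f n))^2)}"

definition l2_inner :: "(nat \<Rightarrow> complex) \<Rightarrow> (nat \<Rightarrow> complex) \<Rightarrow> complex" where
  "l2_inner f g = (\<Sum>n. f n * cnj (g n))"

definition l2_norm :: "(nat \<Rightarrow> complex) \<Rightarrow> real" where
  "l2_norm f = sqrt (\<Sum>n. (cmod (f n))^2)"

type_synonym op = "(nat \<Rightarrow> complex) \<Rightarrow> (nat \<Rightarrow> complex)"

definition bounded_op :: "op \<Rightarrow> bool" where
  "bounded_op T \<longleftrightarrow>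
     (\<forall>f\<in>l2. T f \<in> l2) \<and>
     (\<forall>f\<in>l2. \<forall>g\<in>l2. T (\<lambda>n. f n + g n) = (\<lambda>n. T f n + T g n)) \<and>
     (\<forall>c. \<forall>f\<in>l2. T (\<lambda>n. c * f n) = (\<lambda>n. c * T f n)) \<and>
     (\<exists>C. \<forall>f\<in>l2. l2_norm (T f) \<le> C * l2_norm f) \<and>
     (\<forall>f. f \<notin> l2 \<longrightarrow> T f = (\<lambda>_. 0))"

definition op_norm :: "op \<Rightarrow> real" where
  "op_norm T = Sup {l2_norm (T f) | f. f \<in> l2 \<and> l2_norm f \<le> 1}"

definition id_op :: op where
  "id_op = (\<lambda>f. if f \<in> l2 then f else (\<lambda>_. 0))"

text \<open>Matrix unit E_{i,j}: E_{i,j} e_j = e_i (0-based indices).\<close>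
definition mat_unit :: "nat \<Rightarrow> nat \<Rightarrow> op" where
  "mat_unit i j = (\<lambda>f. if f \<in> l2 then (\<lambda>k. if k = i then f j else 0) else (\<lambda>_. 0))"

definition K0_span :: "op set" where
  "K0_span = {T. \<exists>F c. finite F \<and> (0,0) \<notin> F \<and>
      T = (\<lambda>f n. \<Sum>p\<in>F. c p * mat_unit (fst p) (snd p) f n)}"

definition K0 :: "op set" where
  "K0 = {T. bounded_op T \<and>
      (\<forall>e>0. \<exists>S\<in>K0_span. op_norm (\<lambda>f n. T f n - S f n) < e)}"

definition S0 :: "op set" where
  "S0 = {T. \<exists>c K. K \<in> K0 \<and> T = (\<lambda>f n. c * id_op f n + K f n)}"

text \<open>Positivity in M_n(B(l2)) = B(l2^n): the quadratic form is real and nonnegative.\<close>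
definition op_mat_pos :: "nat \<Rightarrow> (nat \<Rightarrow> nat \<Rightarrow> op) \<Rightarrow> bool" where
  "op_mat_pos n X \<longleftrightarrow>
     (\<forall>x. (\<forall>k<n. x k \<in> l2) \<longrightarrow>
        (let s = (\<Sum>i<n. \<Sum>j<n. l2_inner (X i j (x j)) (x i)) in Im s = 0 \<and> Re s \<ge> 0))"

record 'a cstar_alg =
  carr :: "'a set"
  add :: "'a \<Rightarrow> 'a \<Rightarrow> 'a"
  mul :: "'a \<Rightarrow> 'a \<Rightarrow> 'a"
  scale :: "complex \<Rightarrow> 'a \<Rightarrow> 'a"
  star :: "'a \<Rightarrow> 'a"
  nrm :: "'a \<Rightarrow> real"
  zero :: 'a
  one :: 'a

definition unital_cstar_algebra :: "'a cstar_alg \<Rightarrow> bool" where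
  "unital_cstar_algebra A \<longleftrightarrow>
    zero A \<in> carr A \<and> one A \<in> carr A \<and>
    (\<forall>x\<in>carr A. \<forall>y\<in>carr A. add A x y \<in> carr A \<and> mul A x y \<in> carr A) \<and>
    (\<forall>c. \<forall>x\<in>carr A. scale A c x \<in> carr A) \<and>
    (\<forall>x\<in>carr A. star A x \<in> carr A) \<and>
    \<comment> \<open>complex vector space\<close>
    (\<forall>x\<in>carr A. \<forall>y\<in>carr A. \<forall>z\<in>carr A. add A (add A x y) z = add A x (add A y z)) \<and>
    (\<forall>x\<in>carr A. \<forall>y\<in>carr A. add A x y = add A y x) \<and>
    (\<forall>x\<in>carr A. add A x (zero A) = x) \<and>
    (\<forall>x\<in>carr A. add A x (scale A (-1) x) = zero A) \<and>
    (\<forall>x\<in>carr A. scale A 1 x = x) \<and>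
    (\<forall>a b. \<forall>x\<in>carr A. scale A a (scale A b x) = scale A (a * b) x) \<and>
    (\<forall>a b. \<forall>x\<in>carr A. scale A (a + b) x = add A (scale A a x) (scale A b x)) \<and>
    (\<forall>a. \<forall>x\<in>carr A. \<forall>y\<in>carr A. scale A a (add A x y) = add A (scale A a x) (scale A a y)) \<and>
    \<comment> \<open>unital associative algebra\<close>
    (\<forall>x\<in>carr A. \<forall>y\<in>carr A. \<forall>z\<in>carr A. mul A (mul A x y) z = mul A x (mul A y z)) \<and>
    (\<forall>x\<in>carr A. \<forall>y\<in>carr A. \<forall>z\<in>carr A.
        mul A x (add A y z) = add A (mul A x y) (mul A x z) \<and>
        mul A (add A x y) z = add A (mul A x z) (mul A y z)) \<and>
    (\<forall>a. \<forall>x\<in>carr A. \<forall>y\<in>carr A.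
        mul A (scale A a x) y = scale A a (mul A x y) \<and> mul A x (scale A a y) = scale A a (mul A x y)) \<and>
    (\<forall>x\<in>carr A. mul A (one A) x = x \<and> mul A x (one A) = x) \<and>
    \<comment> \<open>submultiplicative norm\<close>
    (\<forall>x\<in>carr A. nrm A x \<ge> 0 \<and> (nrm A x = 0 \<longleftrightarrow> x = zero A)) \<and>
    (\<forall>x\<in>carr A. \<forall>y\<in>carr A. nrm A (add A x y) \<le> nrm A x + nrm A y) \<and>
    (\<forall>a. \<forall>x\<in>carr A. nrm A (scale A a x) = cmod a * nrm A x) \<and>
    (\<forall>x\<in>carr A. \<forall>y\<in>carr A. nrm A (mul A x y) \<le> nrm A x * nrm A y) \<and>
    \<comment> \<open>completeness\<close>
    (\<forall>X::nat \<Rightarrow> 'a. (\<forall>n. X n \<in> carr A) \<longrightarrow>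
        (\<forall>e>0. \<exists>N. \<forall>m\<ge>N. \<forall>k\<ge>N. nrm A (add A (X m) (scale A (-1) (X k))) < e) \<longrightarrow>
        (\<exists>L\<in>carr A. \<forall>e>0. \<exists>N. \<forall>m\<ge>N. nrm A (add A (X m) (scale A (-1) L)) < e)) \<and>
    \<comment> \<open>involution and C*-identity\<close>
    (\<forall>x\<in>carr A. star A (star A x) = x) \<and>
    (\<forall>x\<in>carr A. \<forall>y\<in>carr A. star A (add A x y) = add A (star A x) (star A y)) \<and>
    (\<forall>a. \<forall>x\<in>carr A. star A (scale A a x) = scale A (cnj a) (star A x)) \<and>
    (\<forall>x\<in>carr A. \<forall>y\<in>carr A. star A (mul A x y) = mul A (star A y) (star A x)) \<and>
    (\<forall>x\<in>carr A. nrm A (mul A (star A x) x) = (nrm A x)^2)"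

primrec asum :: "'a cstar_alg \<Rightarrow> (nat \<Rightarrow> 'a) \<Rightarrow> nat \<Rightarrow> 'a" where
  "asum A f 0 = zero A"
| "asum A f (Suc n) = add A (asum A f n) (f n)"

text \<open>Positive elements of the C*-algebra M_n(A): those of the form Y* Y.\<close>
definition cstar_mat_pos :: "'a cstar_alg \<Rightarrow> nat \<Rightarrow> (nat \<Rightarrow> nat \<Rightarrow> 'a) \<Rightarrow> bool" where
  "cstar_mat_pos A n X \<longleftrightarrow>
     (\<exists>Y. (\<forall>i<n. \<forall>j<n. Y i j \<in> carr A) \<and>
          (\<forall>i<n. \<forall>j<n. X i j = asum A (\<lambda>k. mul A (star A (Y k i)) (Y k j)) n))"

definition ucoi_S0 :: "(op \<Rightarrow> 'a) \<Rightarrow> 'a cstar_alg \<Rightarrow> bool" where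
  "ucoi_S0 phi A \<longleftrightarrow>
     phi ` S0 = carr A \<and> inj_on phi S0 \<and>
     (\<forall>c. \<forall>S\<in>S0. \<forall>T\<in>S0. phi (\<lambda>f n. c * S f n + T f n) = add A (scale A c (phi S)) (phi T)) \<and>
     phi id_op = one A \<and>
     (\<forall>n X. (\<forall>i<n. \<forall>j<n. X i j \<in> S0) \<longrightarrow>
        (op_mat_pos n X \<longleftrightarrow> cstar_mat_pos A n (\<lambda>i j. phi (X i j))))"

end

theory Submission
  imports Defs
begin

text \<open>
  Suppose phi were a unital complete order isomorphism from S0 onto a unital C*-algebra A.
  Let T = E(1,0), a = phi T, and let S, B \<in> S0 be the preimages of a* and a* a. Positivity of
  [[1, a], [a*, a* a]] in M_2(A) pulls back to [[I, T], [S, B]] \<ge> 0, which forces S = T* and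
  T* T = E(0,0) \<le> B. Conversely, whenever [[I, T], [T*, G]] \<ge> 0 with G \<in> S0, the Schur
  complement phi G - a* a is a sum of squares in A, so B \<le> G; taking G = I - E(m,m) with
  m \<noteq> 0 gives B \<le> I - E(m,m). But B = c I + K with K in the norm closure K0 of the span of
  the matrix units other than E(0,0), so K(0,0) = 0 and K(m,m) is small for suitable m:
  the first inequality gives Re c \<ge> 1 and the second Re c \<le> |K(m,m)| < 1.
  (Indices are 0-based, so E(0,0) is the paper's E_{1,1}.)
\<close>

section \<open>Vectors in l2\<close>

definition basis_vec :: "nat \<Rightarrow> complex \<Rightarrow> nat \<Rightarrow> complex" where
  "basis_vec k v = (\<lambda>n. if n = k then v else 0)"

lemma basis_vec_same [simp]: "basis_vec k v k = v"
  by (simp add: basis_vec_def)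

lemma l2_iff_summable: "f \<in> l2 \<longleftrightarrow> summable (\<lambda>n. (cmod (f n))^2)"
  by (simp add: l2_def)

lemma l2_norm_nonneg: "f \<in> l2 \<Longrightarrow> 0 \<le> l2_norm f"
  by (simp add: l2_norm_def l2_iff_summable suminf_nonneg)

lemma zero_in_l2: "(\<lambda>n. 0) \<in> l2"
  by (simp add: l2_def)

lemma basis_vec_l2: "basis_vec k v \<in> l2" and l2_norm_basis_vec: "l2_norm (basis_vec k v) = cmod v"
proof -
  have "(\<lambda>n. (cmod (basis_vec k v n))^2) = (\<lambda>n. if n = k then (cmod v)^2 else 0)"
    by (auto simp: basis_vec_def)
  moreover have "(\<lambda>n. if n = k then (cmod v)^2 else 0) sums (cmod v)^2"
    using sums_single[of k "\<lambda>_. (cmod v)^2"] by simp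
  ultimately show "basis_vec k v \<in> l2" "l2_norm (basis_vec k v) = cmod v"
    by (auto simp: l2_def l2_norm_def sums_iff)
qed

lemma l2_scale: "f \<in> l2 \<Longrightarrow> (\<lambda>n. c * f n) \<in> l2"
  and l2_norm_scale: "f \<in> l2 \<Longrightarrow> l2_norm (\<lambda>n. c * f n) = cmod c * l2_norm f"
proof -
  assume "f \<in> l2"
  then have sf: "summable (\<lambda>n. (cmod (f n))^2)" by (simp add: l2_iff_summable)
  have eq: "(\<lambda>n. (cmod (c * f n))^2) = (\<lambda>n. (cmod c)^2 * (cmod (f n))^2)"
    by (simp add: norm_mult power_mult_distrib)
  show "(\<lambda>n. c * f n) \<in> l2"
    unfolding l2_iff_summable eq using sf by (rule summable_mult)
  show "l2_norm (\<lambda>n. c * f n) = cmod c * l2_norm f"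
    unfolding l2_norm_def eq using sf by (simp add: suminf_mult real_sqrt_mult)
qed

lemma l2_add: "f \<in> l2 \<Longrightarrow> g \<in> l2 \<Longrightarrow> (\<lambda>n. f n + g n) \<in> l2"
  and l2_norm_add_le: "f \<in> l2 \<Longrightarrow> g \<in> l2 \<Longrightarrow> l2_norm (\<lambda>n. f n + g n) \<le> 2 * (l2_norm f + l2_norm g)"
proof -
  assume "f \<in> l2" "g \<in> l2"
  then have sf: "summable (\<lambda>n. (cmod (f n))^2)" and sg: "summable (\<lambda>n. (cmod (g n))^2)"
    by (simp_all add: l2_iff_summable)
  have pt: "(cmod (f n + g n))^2 \<le> 2 * (cmod (f n))^2 + 2 * (cmod (g n))^2" for n
  proof -
    have "(cmod (f n + g n))^2 \<le> (cmod (f n) + cmod (g n))^2"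
      by (intro power_mono norm_triangle_ineq) simp
    also have "\<dots> \<le> 2 * (cmod (f n))^2 + 2 * (cmod (g n))^2"
      using sum_squares_bound[of "cmod (f n)" "cmod (g n)"] by (simp add: power2_sum)
    finally show ?thesis .
  qed
  have s2: "summable (\<lambda>n. 2 * (cmod (f n))^2 + 2 * (cmod (g n))^2)"
    using sf sg by (intro summable_add summable_mult)
  have s: "summable (\<lambda>n. (cmod (f n + g n))^2)"
    by (rule summable_comparison_test[OF _ s2]) (use pt in auto)
  then show "(\<lambda>n. f n + g n) \<in> l2" by (simp add: l2_iff_summable)
  define P where "P = (\<Sum>n. (cmod (f n))^2)"
  define Q where "Q = (\<Sum>n. (cmod (g n))^2)"
  have P0: "0 \<le> P" and Q0: "0 \<le> Q"
    unfolding P_def Q_def using sf sg by (simp_all add: suminf_nonneg)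
  have "(\<Sum>n. (cmod (f n + g n))^2) \<le> (\<Sum>n. 2 * (cmod (f n))^2 + 2 * (cmod (g n))^2)"
    by (rule suminf_le[OF pt s s2])
  also have "\<dots> = 2 * P + 2 * Q"
    unfolding P_def Q_def using sf sg by (simp add: suminf_add[symmetric] suminf_mult summable_mult)
  also have "\<dots> \<le> 4 * (sqrt P)^2 + 4 * (sqrt Q)^2 + 8 * (sqrt P * sqrt Q)"
    using P0 Q0 by simp
  also have "\<dots> = (2 * (sqrt P + sqrt Q))^2"
    by (simp add: power2_sum power_mult_distrib algebra_simps)
  finally show "l2_norm (\<lambda>n. f n + g n) \<le> 2 * (l2_norm f + l2_norm g)"
    unfolding l2_norm_def P_def[symmetric] Q_def[symmetric] using P0 Q0 by (intro real_le_lsqrt) auto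
qed

lemma l2_coord_le_norm: "f \<in> l2 \<Longrightarrow> cmod (f k) \<le> l2_norm f"
proof -
  assume "f \<in> l2"
  then have "(\<Sum>n\<in>{k}. (cmod (f n))^2) \<le> (\<Sum>n. (cmod (f n))^2)"
    by (intro sum_le_suminf) (auto simp: l2_iff_summable)
  then show ?thesis unfolding l2_norm_def by (intro real_le_rsqrt) simp
qed

lemma l2_two_coords_le:
  assumes "f \<in> l2" "i \<noteq> j"
  shows "(cmod (f i))^2 + (cmod (f j))^2 \<le> (\<Sum>n. (cmod (f n))^2)"
proof -
  have "(\<Sum>n\<in>{i, j}. (cmod (f n))^2) \<le> (\<Sum>n. (cmod (f n))^2)"
    using assms(1) by (intro sum_le_suminf) (auto simp: l2_iff_summable)
  then show ?thesis using assms(2) by simp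
qed

lemma summable_l2_inner:
  assumes "f \<in> l2" "g \<in> l2"
  shows "summable (\<lambda>n. f n * cnj (g n))"
proof (rule summable_comparison_test)
  show "summable (\<lambda>n. (cmod (f n))^2 + (cmod (g n))^2)"
    using assms by (intro summable_add) (simp_all add: l2_iff_summable)
  have "norm (f n * cnj (g n)) \<le> (cmod (f n))^2 + (cmod (g n))^2" for n
  proof -
    have "0 \<le> cmod (f n) * cmod (g n)" by simp
    then show ?thesis
      using sum_squares_bound[of "cmod (f n)" "cmod (g n)"] unfolding norm_mult complex_mod_cnj
      by linarith
  qed
  then show "\<exists>N. \<forall>n\<ge>N. norm (f n * cnj (g n)) \<le> (cmod (f n))^2 + (cmod (g n))^2"
    by blast
qed

lemma l2_inner_self: "f \<in> l2 \<Longrightarrow> l2_inner f f = of_real (\<Sum>n. (cmod (f n))^2)"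
  unfolding l2_inner_def complex_norm_square[symmetric]
  by (rule suminf_of_real[symmetric]) (simp add: l2_iff_summable)

lemma l2_inner_self_nonneg: "f \<in> l2 \<Longrightarrow> 0 \<le> Re (l2_inner f f)"
  and Im_l2_inner_self: "f \<in> l2 \<Longrightarrow> Im (l2_inner f f) = 0"
  by (simp_all add: l2_inner_self suminf_nonneg l2_iff_summable)

lemma l2_inner_commute: "f \<in> l2 \<Longrightarrow> g \<in> l2 \<Longrightarrow> l2_inner g f = cnj (l2_inner f g)"
proof -
  assume "f \<in> l2" "g \<in> l2"
  then have "(\<lambda>n. f n * cnj (g n)) sums l2_inner f g"
    unfolding l2_inner_def by (intro summable_sums summable_l2_inner)
  then have "(\<lambda>n. g n * cnj (f n)) sums cnj (l2_inner f g)"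
    using sums_cnj[of "\<lambda>n. f n * cnj (g n)"] by (simp add: mult.commute)
  then show ?thesis unfolding l2_inner_def by (rule sums_unique[symmetric])
qed

lemma l2_inner_add_left:
  "f \<in> l2 \<Longrightarrow> g \<in> l2 \<Longrightarrow> h \<in> l2 \<Longrightarrow> l2_inner (\<lambda>n. f n + g n) h = l2_inner f h + l2_inner g h"
  unfolding l2_inner_def by (simp add: distrib_right suminf_add summable_l2_inner)

lemma l2_inner_scale_left: "f \<in> l2 \<Longrightarrow> g \<in> l2 \<Longrightarrow> l2_inner (\<lambda>n. c * f n) g = c * l2_inner f g"
  unfolding l2_inner_def by (simp add: mult.assoc suminf_mult summable_l2_inner)

lemma l2_inner_lincomb_left:
  "f \<in> l2 \<Longrightarrow> g \<in> l2 \<Longrightarrow> h \<in> l2 \<Longrightarrow> l2_inner (\<lambda>n. c * f n + g n) h = c * l2_inner f h + l2_inner g h"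
  by (simp add: l2_inner_add_left l2_inner_scale_left l2_scale)

lemma l2_inner_scale_right: "f \<in> l2 \<Longrightarrow> g \<in> l2 \<Longrightarrow> l2_inner f (\<lambda>n. c * g n) = cnj c * l2_inner f g"
  unfolding l2_inner_def by (simp add: mult_ac suminf_mult summable_l2_inner)

lemma l2_inner_basis_vec_left: "l2_inner (basis_vec k v) g = v * cnj (g k)"
proof -
  have "(\<lambda>n. basis_vec k v n * cnj (g n)) = (\<lambda>n. if n = k then v * cnj (g k) else 0)"
    by (auto simp: basis_vec_def)
  then show ?thesis
    unfolding l2_inner_def using sums_unique[OF sums_single[of k "\<lambda>_. v * cnj (g k)"]] by simp
qed

lemma l2_inner_basis_vec_right: "l2_inner f (basis_vec k v) = f k * cnj v"
proof -
  have "(\<lambda>n. f n * cnj (basis_vec k v n)) = (\<lambda>n. if n = k then f k * cnj v else 0)"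
    by (auto simp: basis_vec_def)
  then show ?thesis
    unfolding l2_inner_def using sums_unique[OF sums_single[of k "\<lambda>_. f k * cnj v"]] by simp
qed

lemma l2_inner_zero_left [simp]: "l2_inner (\<lambda>n. 0) g = 0"
  by (simp add: l2_inner_def)

lemma Re_l2_inner_add_self:
  assumes f: "f \<in> l2" and g: "g \<in> l2"
  shows "Re (l2_inner (\<lambda>n. f n + g n) (\<lambda>n. f n + g n))
    = Re (l2_inner f f) + 2 * Re (l2_inner g f) + Re (l2_inner g g)"
proof -
  have fg: "(\<lambda>n. f n + g n) \<in> l2" using f g by (rule l2_add)
  have "Re (l2_inner (\<lambda>n. f n + g n) (\<lambda>n. f n + g n))
      = Re (l2_inner f (\<lambda>n. f n + g n)) + Re (l2_inner g (\<lambda>n. f n + g n))"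
    using l2_inner_add_left[OF f g fg] by simp
  also have "Re (l2_inner f (\<lambda>n. f n + g n)) = Re (l2_inner f f) + Re (l2_inner g f)"
    unfolding l2_inner_commute[OF fg f] l2_inner_add_left[OF f g f] by simp
  also have "Re (l2_inner g (\<lambda>n. f n + g n)) = Re (l2_inner g f) + Re (l2_inner g g)"
    unfolding l2_inner_commute[OF fg g] l2_inner_add_left[OF f g g] l2_inner_commute[OF g f] by simp
  finally show ?thesis by simp
qed

section \<open>Bounded operators and the operator system S0\<close>

lemma bounded_op_l2: "bounded_op T \<Longrightarrow> f \<in> l2 \<Longrightarrow> T f \<in> l2"
  and bounded_op_add: "bounded_op T \<Longrightarrow> f \<in> l2 \<Longrightarrow> g \<in> l2 \<Longrightarrow> T (\<lambda>n. f n + g n) = (\<lambda>n. T f n + T g n)"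
  and bounded_op_scale: "bounded_op T \<Longrightarrow> f \<in> l2 \<Longrightarrow> T (\<lambda>n. c * f n) = (\<lambda>n. c * T f n)"
  and bounded_op_outside: "bounded_op T \<Longrightarrow> f \<notin> l2 \<Longrightarrow> T f = (\<lambda>_. 0)"
  unfolding bounded_op_def by blast+

lemma bounded_opE:
  assumes "bounded_op T"
  obtains C where "\<And>f. f \<in> l2 \<Longrightarrow> l2_norm (T f) \<le> C * l2_norm f"
  using assms unfolding bounded_op_def by blast

lemma mat_unit_apply: "f \<in> l2 \<Longrightarrow> mat_unit i j f = basis_vec i (f j)"
  by (simp add: mat_unit_def basis_vec_def)

lemma id_op_apply: "f \<in> l2 \<Longrightarrow> id_op f = f"
  by (simp add: id_op_def)

lemma bounded_id_op: "bounded_op id_op"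
  unfolding bounded_op_def id_op_def using l2_add l2_scale by (auto intro: exI[of _ 1])

lemma bounded_zero_op: "bounded_op (\<lambda>f n. 0)"
  unfolding bounded_op_def using zero_in_l2 by (auto simp: l2_norm_def intro: exI[of _ 0])

lemma bounded_mat_unit: "bounded_op (mat_unit i j)"
  unfolding bounded_op_def
  using l2_add l2_scale l2_coord_le_norm
  by (auto simp: mat_unit_apply basis_vec_l2 l2_norm_basis_vec intro!: exI[of _ 1])
     (auto simp: basis_vec_def mat_unit_def)

lemma bounded_op_lincomb:
  assumes K: "bounded_op K" and G: "bounded_op G"
  shows "bounded_op (\<lambda>f n. c * K f n + G f n)"
  unfolding bounded_op_def
proof (intro conjI ballI allI impI)
  fix f assume f: "f \<in> l2"
  show "(\<lambda>n. c * K f n + G f n) \<in> l2"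
    using f K G by (simp add: l2_add l2_scale bounded_op_l2)
next
  fix f g assume "f \<in> l2" "g \<in> l2"
  then show "(\<lambda>n. c * K (\<lambda>n. f n + g n) n + G (\<lambda>n. f n + g n) n)
      = (\<lambda>n. (c * K f n + G f n) + (c * K g n + G g n))"
    by (simp add: bounded_op_add[OF K] bounded_op_add[OF G] algebra_simps)
next
  fix a f assume "f \<in> l2"
  then show "(\<lambda>n. c * K (\<lambda>n. a * f n) n + G (\<lambda>n. a * f n) n) = (\<lambda>n. a * (c * K f n + G f n))"
    by (simp add: bounded_op_scale[OF K] bounded_op_scale[OF G] algebra_simps)
next
  obtain C1 where C1: "\<And>f. f \<in> l2 \<Longrightarrow> l2_norm (K f) \<le> C1 * l2_norm f" using bounded_opE[OF K] by blast
  obtain C2 where C2: "\<And>f. f \<in> l2 \<Longrightarrow> l2_norm (G f) \<le> C2 * l2_norm f" using bounded_opE[OF G] by blast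
  have "l2_norm (\<lambda>n. c * K f n + G f n) \<le> 2 * (cmod c * C1 + C2) * l2_norm f" if f: "f \<in> l2" for f
  proof -
    have Kf: "K f \<in> l2" and Gf: "G f \<in> l2" using f K G by (simp_all add: bounded_op_l2)
    have "l2_norm (\<lambda>n. c * K f n + G f n) \<le> 2 * (cmod c * l2_norm (K f) + l2_norm (G f))"
      using l2_norm_add_le[OF l2_scale[OF Kf] Gf] by (simp add: l2_norm_scale[OF Kf])
    also have "\<dots> \<le> 2 * (cmod c * (C1 * l2_norm f) + C2 * l2_norm f)"
      using C1 C2 f by (intro mult_left_mono add_mono) auto
    also have "\<dots> = 2 * (cmod c * C1 + C2) * l2_norm f" by (simp add: algebra_simps)
    finally show ?thesis .
  qed
  then show "\<exists>C. \<forall>f\<in>l2. l2_norm (\<lambda>n. c * K f n + G f n) \<le> C * l2_norm f" by blast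
next
  fix f :: "nat \<Rightarrow> complex" assume "f \<notin> l2"
  then show "(\<lambda>n. c * K f n + G f n) = (\<lambda>_. 0)"
    by (simp add: bounded_op_outside[OF K] bounded_op_outside[OF G])
qed

lemma l2_norm_le_op_norm:
  assumes T: "bounded_op T" and f: "f \<in> l2" "l2_norm f \<le> 1"
  shows "l2_norm (T f) \<le> op_norm T"
proof -
  obtain C where C: "\<And>f. f \<in> l2 \<Longrightarrow> l2_norm (T f) \<le> C * l2_norm f" using bounded_opE[OF T] by blast
  have "l2_norm (T g) \<le> \<bar>C\<bar>" if "g \<in> l2" "l2_norm g \<le> 1" for g
  proof -
    have "l2_norm (T g) \<le> \<bar>C\<bar> * l2_norm g"
      using C[OF that(1)] mult_right_mono[OF abs_ge_self l2_norm_nonneg[OF that(1)]]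
      by (rule order.trans)
    also have "\<dots> \<le> \<bar>C\<bar>" using that l2_norm_nonneg[OF that(1)] by (simp add: mult_left_le)
    finally show ?thesis .
  qed
  then have "bdd_above {l2_norm (T f) | f. f \<in> l2 \<and> l2_norm f \<le> 1}"
    by (intro bdd_aboveI[of _ "\<bar>C\<bar>"]) blast
  then show ?thesis unfolding op_norm_def using f by (intro cSup_upper) auto
qed

lemma op_norm_lincomb_le:
  assumes K: "bounded_op K" and G: "bounded_op G"
  shows "op_norm (\<lambda>f n. c * K f n + G f n) \<le> 2 * (cmod c * op_norm K + op_norm G)"
  unfolding op_norm_def [of "\<lambda>f n. c * K f n + G f n"]
proof (rule cSup_least)
  show "{l2_norm (\<lambda>n. c * K f n + G f n) | f. f \<in> l2 \<and> l2_norm f \<le> 1} \<noteq> {}"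
    using zero_in_l2 by (auto simp: l2_norm_def)
  fix x assume "x \<in> {l2_norm (\<lambda>n. c * K f n + G f n) | f. f \<in> l2 \<and> l2_norm f \<le> 1}"
  then obtain f where f: "f \<in> l2" "l2_norm f \<le> 1" and x: "x = l2_norm (\<lambda>n. c * K f n + G f n)"
    by blast
  have Kf: "K f \<in> l2" and Gf: "G f \<in> l2" using f K G by (simp_all add: bounded_op_l2)
  have "x \<le> 2 * (cmod c * l2_norm (K f) + l2_norm (G f))"
    unfolding x using l2_norm_add_le[OF l2_scale[OF Kf] Gf] by (simp add: l2_norm_scale[OF Kf])
  also have "\<dots> \<le> 2 * (cmod c * op_norm K + op_norm G)"
    using l2_norm_le_op_norm[OF K f] l2_norm_le_op_norm[OF G f] by (intro mult_left_mono add_mono) auto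
  finally show "x \<le> 2 * (cmod c * op_norm K + op_norm G)" .
qed

lemma diag_entry_le_op_norm: "bounded_op T \<Longrightarrow> cmod (T (basis_vec j 1) j) \<le> op_norm T"
  using l2_coord_le_norm[OF bounded_op_l2] l2_norm_le_op_norm
  by (metis basis_vec_l2 l2_norm_basis_vec norm_one order.refl order.trans)

lemma op_norm_zero: "op_norm (\<lambda>f n. 0) = 0"
proof -
  have "{l2_norm ((\<lambda>f n. 0::complex) f) | f. f \<in> l2 \<and> l2_norm f \<le> 1} = {0}"
    using zero_in_l2 by (auto simp: l2_norm_def)
  then show ?thesis by (simp add: op_norm_def)
qed

definition unit_comb :: "(nat \<times> nat) set \<Rightarrow> (nat \<times> nat \<Rightarrow> complex) \<Rightarrow> op" where
  "unit_comb F c = (\<lambda>f n. \<Sum>p\<in>F. c p * mat_unit (fst p) (snd p) f n)"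

lemma K0_span_iff: "T \<in> K0_span \<longleftrightarrow> (\<exists>F c. finite F \<and> (0, 0) \<notin> F \<and> T = unit_comb F c)"
  by (simp add: K0_span_def unit_comb_def)

lemma bounded_unit_comb: "finite F \<Longrightarrow> bounded_op (unit_comb F c)"
proof (induction F rule: finite_induct)
  case empty
  then show ?case by (simp add: unit_comb_def bounded_zero_op)
next
  case (insert p F)
  then have "unit_comb (insert p F) c
      = (\<lambda>f n. c p * mat_unit (fst p) (snd p) f n + unit_comb F c f n)"
    by (simp add: unit_comb_def)
  then show ?case using insert.IH by (simp add: bounded_op_lincomb bounded_mat_unit)
qed

lemma unit_comb_extend:
  "finite G \<Longrightarrow> F \<subseteq> G \<Longrightarrow> unit_comb F c = unit_comb G (\<lambda>p. if p \<in> F then c p else 0)"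
  unfolding unit_comb_def by (intro ext sum.mono_neutral_cong_left) auto

lemma unit_comb_lincomb:
  assumes "finite F" "finite G"
  shows "(\<lambda>f n. a * unit_comb F c f n + unit_comb G d f n)
    = unit_comb (F \<union> G) (\<lambda>p. a * (if p \<in> F then c p else 0) + (if p \<in> G then d p else 0))"
  using assms
  by (simp add: unit_comb_extend[of "F \<union> G" F] unit_comb_extend[of "F \<union> G" G])
     (simp add: unit_comb_def sum_distrib_left sum.distrib algebra_simps)

lemma K0_span_lincomb:
  assumes "S \<in> K0_span" "T \<in> K0_span"
  shows "(\<lambda>f n. a * S f n + T f n) \<in> K0_span"
proof -
  obtain F c G d where "finite F" "(0, 0) \<notin> F" "S = unit_comb F c"
    and "finite G" "(0, 0) \<notin> G" "T = unit_comb G d"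
    using assms by (auto simp: K0_span_iff)
  then show ?thesis by (auto simp: K0_span_iff unit_comb_lincomb)
qed

lemma K0_span_subset_K0: "K0_span \<subseteq> K0"
proof
  fix T assume T: "T \<in> K0_span"
  then have "bounded_op T" by (auto simp: K0_span_iff bounded_unit_comb)
  moreover have "op_norm (\<lambda>f n. T f n - T f n) < e" if "e > 0" for e
    using that by (simp add: op_norm_zero)
  ultimately show "T \<in> K0" unfolding K0_def using T by blast
qed

lemma K0_lincomb:
  assumes K: "K \<in> K0" and L: "L \<in> K0"
  shows "(\<lambda>f n. a * K f n + L f n) \<in> K0"
proof -
  have bK: "bounded_op K" and bL: "bounded_op L" using K L by (simp_all add: K0_def)
  have "\<exists>S\<in>K0_span. op_norm (\<lambda>f n. (a * K f n + L f n) - S f n) < e" if e: "e > 0" for e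
  proof -
    define d where "d = e / (2 * (cmod a + 1))"
    have d: "d > 0" using e by (simp add: d_def add_nonneg_pos)
    obtain S where S: "S \<in> K0_span" "op_norm (\<lambda>f n. K f n - S f n) < d"
      using K d by (auto simp: K0_def)
    obtain T where T: "T \<in> K0_span" "op_norm (\<lambda>f n. L f n - T f n) < d"
      using L d by (auto simp: K0_def)
    have diff_bounded: "bounded_op (\<lambda>f n. M f n - R f n)" if "bounded_op M" "R \<in> K0_span" for M R
    proof -
      have "bounded_op (\<lambda>f n. (-1) * R f n + M f n)"
        using that by (intro bounded_op_lincomb) (auto simp: K0_span_iff bounded_unit_comb)
      then show ?thesis by simp
    qed
    have "op_norm (\<lambda>f n. (a * K f n + L f n) - (a * S f n + T f n))
        = op_norm (\<lambda>f n. a * (K f n - S f n) + (L f n - T f n))"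
      by (simp add: algebra_simps)
    also have "\<dots> \<le> 2 * (cmod a * op_norm (\<lambda>f n. K f n - S f n) + op_norm (\<lambda>f n. L f n - T f n))"
      using diff_bounded[OF bK S(1)] diff_bounded[OF bL T(1)] by (rule op_norm_lincomb_le)
    also have "\<dots> < 2 * (cmod a * d + d)"
      using S(2) T(2) by (intro mult_strict_left_mono add_le_less_mono mult_left_mono) auto
    also have "\<dots> = 2 * (cmod a + 1) * d" by (simp add: algebra_simps)
    also have "\<dots> = e" unfolding d_def by (simp add: add_nonneg_pos less_imp_neq[symmetric])
    finally show ?thesis
      by (intro bexI[OF _ K0_span_lincomb[OF S(1) T(1), of a]])
  qed
  then show ?thesis using bounded_op_lincomb[OF bK bL] by (simp add: K0_def)
qed

lemma unit_comb_in_K0: "finite F \<Longrightarrow> (0, 0) \<notin> F \<Longrightarrow> unit_comb F c \<in> K0"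
  by (rule subsetD[OF K0_span_subset_K0]) (auto simp: K0_span_iff)

lemma S0_memI: "K \<in> K0 \<Longrightarrow> (\<lambda>f n. c * id_op f n + K f n) \<in> S0"
  unfolding S0_def by blast

lemma S0_lincomb:
  assumes "S \<in> S0" "T \<in> S0"
  shows "(\<lambda>f n. a * S f n + T f n) \<in> S0"
proof -
  obtain c K d L where "K \<in> K0" "S = (\<lambda>f n. c * id_op f n + K f n)"
    and "L \<in> K0" "T = (\<lambda>f n. d * id_op f n + L f n)"
    using assms unfolding S0_def by blast
  then have "(\<lambda>f n. a * S f n + T f n) = (\<lambda>f n. (a * c + d) * id_op f n + (a * K f n + L f n))"
    by (simp add: algebra_simps)
  then show ?thesis using \<open>K \<in> K0\<close> \<open>L \<in> K0\<close> by (simp add: S0_memI K0_lincomb)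
qed

lemma unit_comb_in_S0: "finite F \<Longrightarrow> (0, 0) \<notin> F \<Longrightarrow> unit_comb F c \<in> S0"
proof -
  assume "finite F" "(0, 0) \<notin> F"
  then have "(\<lambda>f n. 0 * id_op f n + unit_comb F c f n) \<in> S0"
    by (intro S0_memI unit_comb_in_K0)
  then show ?thesis by simp
qed

lemma mat_unit_in_S0: "(i, j) \<noteq> (0, 0) \<Longrightarrow> mat_unit i j \<in> S0"
  using unit_comb_in_S0[of "{(i, j)}" "\<lambda>_. 1"] by (simp add: unit_comb_def)

lemma id_op_in_S0: "id_op \<in> S0"
proof -
  have "(\<lambda>f n. 1 * id_op f n + unit_comb {} (\<lambda>_. 0) f n) \<in> S0"
    by (intro S0_memI unit_comb_in_K0) auto
  then show ?thesis by (simp add: unit_comb_def)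
qed

lemma zero_op_in_S0: "(\<lambda>f n. 0) \<in> S0"
  using unit_comb_in_S0[of "{}"] by (simp add: unit_comb_def)

lemma S0_bounded: "T \<in> S0 \<Longrightarrow> bounded_op T"
  unfolding S0_def K0_def by (auto intro: bounded_op_lincomb bounded_id_op)

lemma unit_comb_diag_entry: "(j, j) \<notin> F \<Longrightarrow> unit_comb F c (basis_vec j 1) j = 0"
  unfolding unit_comb_def
  by (intro sum.neutral ballI) (simp add: mat_unit_apply[OF basis_vec_l2], auto simp: basis_vec_def)

lemma K0_diagonal_small:
  assumes K: "K \<in> K0" and e: "e > 0"
  obtains F where "finite F" "(0, 0) \<notin> F" "\<And>j. (j, j) \<notin> F \<Longrightarrow> cmod (K (basis_vec j 1) j) < e"
proof -
  obtain S where S: "S \<in> K0_span" "op_norm (\<lambda>f n. K f n - S f n) < e"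
    using K e by (auto simp: K0_def)
  then obtain F c where F: "finite F" "(0, 0) \<notin> F" "S = unit_comb F c"
    by (auto simp: K0_span_iff)
  have "bounded_op (\<lambda>f n. (-1) * S f n + K f n)"
    using K F by (intro bounded_op_lincomb) (simp_all add: K0_def bounded_unit_comb)
  then have D: "bounded_op (\<lambda>f n. K f n - S f n)" by simp
  have "cmod (K (basis_vec j 1) j) < e" if "(j, j) \<notin> F" for j
    using diag_entry_le_op_norm[OF D, of j] S(2) unit_comb_diag_entry[OF that, of c] F(3) by simp
  then show ?thesis using that F by blast
qed

lemma K0_entry_00:
  assumes K: "K \<in> K0"
  shows "K (basis_vec 0 1) 0 = 0"
proof (rule ccontr)
  assume "K (basis_vec 0 1) 0 \<noteq> 0"
  then obtain F where "(0, 0) \<notin> F"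
    and "\<And>j. (j, j) \<notin> F \<Longrightarrow> cmod (K (basis_vec j 1) j) < cmod (K (basis_vec 0 1) 0)"
    using K0_diagonal_small[OF K, of "cmod (K (basis_vec 0 1) 0)"] by auto
  then show False by blast
qed

lemma K0_small_diagonal_entry:
  assumes "K \<in> K0" "e > 0"
  obtains m where "m \<noteq> 0" "cmod (K (basis_vec m 1) m) < e"
proof -
  obtain F where F: "finite F" "\<And>j. (j, j) \<notin> F \<Longrightarrow> cmod (K (basis_vec j 1) j) < e"
    using K0_diagonal_small[OF assms] by blast
  have "finite (insert 0 (fst ` F))" using F(1) by simp
  then obtain m where m: "m \<notin> insert 0 (fst ` F)"
    using ex_new_if_finite[OF infinite_UNIV_nat] by blast
  then have "(m, m) \<notin> F" by force
  with m show ?thesis using that F(2) by blast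
qed

section \<open>Positivity of 2x2 operator matrices\<close>

definition mat2 :: "'b \<Rightarrow> 'b \<Rightarrow> 'b \<Rightarrow> 'b \<Rightarrow> nat \<Rightarrow> nat \<Rightarrow> 'b" where
  "mat2 p q r t = (\<lambda>i j. if i = 0 then if j = 0 then p else q else if j = 0 then r else t)"

lemma mat2_simps [simp]:
  "mat2 p q r t 0 0 = p" "mat2 p q r t 0 1 = q" "mat2 p q r t 1 0 = r" "mat2 p q r t 1 1 = t"
  "mat2 p q r t 0 (Suc 0) = q" "mat2 p q r t (Suc 0) 0 = r" "mat2 p q r t (Suc 0) (Suc 0) = t"
  by (simp_all add: mat2_def)

lemma all_less_2: "(\<forall>i<2::nat. P i) \<longleftrightarrow> P 0 \<and> P 1"
  by (auto simp: numeral_2_eq_2 less_Suc_eq)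

definition quad_form2 :: "(nat \<Rightarrow> nat \<Rightarrow> op) \<Rightarrow> (nat \<Rightarrow> complex) \<Rightarrow> (nat \<Rightarrow> complex) \<Rightarrow> complex" where
  "quad_form2 X x y =
     l2_inner (X 0 0 x) x + l2_inner (X 0 1 y) x + l2_inner (X 1 0 x) y + l2_inner (X 1 1 y) y"

lemma op_mat_pos_2_iff:
  "op_mat_pos 2 X \<longleftrightarrow> (\<forall>x\<in>l2. \<forall>y\<in>l2. Im (quad_form2 X x y) = 0 \<and> 0 \<le> Re (quad_form2 X x y))"
proof -
  have sum: "(\<Sum>i<2. \<Sum>j<2. l2_inner (X i j (v j)) (v i)) = quad_form2 X (v 0) (v 1)" for v
    by (simp add: quad_form2_def numeral_2_eq_2 add.assoc)
  show ?thesis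
  proof (intro iffI ballI)
    fix x y assume pos: "op_mat_pos 2 X" and "x \<in> l2" "y \<in> l2"
    then have "\<forall>k<2. (\<lambda>k. if k = 0 then x else y) k \<in> l2" by (simp add: all_less_2)
    with pos show "Im (quad_form2 X x y) = 0 \<and> 0 \<le> Re (quad_form2 X x y)"
      unfolding op_mat_pos_def sum Let_def by fastforce
  next
    assume "\<forall>x\<in>l2. \<forall>y\<in>l2. Im (quad_form2 X x y) = 0 \<and> 0 \<le> Re (quad_form2 X x y)"
    then show "op_mat_pos 2 X"
      unfolding op_mat_pos_def sum Let_def all_less_2 by blast
  qed
qed

lemma op_mat_pos_2_adjoint:
  assumes pos: "op_mat_pos 2 (mat2 id_op T S B)"
    and T: "bounded_op T" and S: "bounded_op S" and B: "bounded_op B"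
    and x: "x \<in> l2" and y: "y \<in> l2"
  shows "l2_inner (S x) y = cnj (l2_inner (T y) x)"
proof -
  define \<alpha> where "\<alpha> = l2_inner (T y) x"
  define \<beta> where "\<beta> = l2_inner (S x) y"
  define D where "D = l2_inner x x + l2_inner (B y) y"
  have Im_form: "Im (D + t * \<alpha> + cnj t * \<beta> + (t * cnj t - 1) * l2_inner (B y) y) = 0" for t
  proof -
    have ty: "(\<lambda>n. t * y n) \<in> l2" using y by (rule l2_scale)
    have "quad_form2 (mat2 id_op T S B) x (\<lambda>n. t * y n)
        = D + t * \<alpha> + cnj t * \<beta> + (t * cnj t - 1) * l2_inner (B y) y"
      using x y T S B
      by (simp add: quad_form2_def \<alpha>_def \<beta>_def D_def id_op_apply bounded_op_scale bounded_op_l2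
          l2_inner_scale_left l2_inner_scale_right l2_scale algebra_simps)
    then show ?thesis using pos x ty unfolding op_mat_pos_2_iff by metis
  qed
  have "Im (D + \<alpha> + \<beta>) = 0" "Im (D - \<alpha> - \<beta>) = 0" "Im (D + \<i> * \<alpha> - \<i> * \<beta>) = 0"
    using Im_form[of 1] Im_form[of "-1"] Im_form[of \<i>] by simp_all
  then show ?thesis unfolding \<beta>_def[symmetric] \<alpha>_def[symmetric] by (simp add: complex_eq_iff)
qed

lemma op_mat_pos_2_abs_square_le:
  assumes pos: "op_mat_pos 2 (mat2 id_op T S B)"
    and T: "bounded_op T" and S: "bounded_op S" and B: "bounded_op B" and x: "x \<in> l2"
  shows "Re (l2_inner (T x) (T x)) \<le> Re (l2_inner (B x) x)"
proof -
  have Tx: "T x \<in> l2" using T x by (rule bounded_op_l2)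
  have scaled: "l2_inner (\<lambda>n. c * T x n) (\<lambda>n. c * T x n) = c * cnj c * l2_inner (T x) (T x)"
    "l2_inner (T x) (\<lambda>n. c * T x n) = cnj c * l2_inner (T x) (T x)" for c
    using Tx by (simp_all add: l2_inner_scale_left l2_inner_scale_right l2_scale)
  define u where "u = (\<lambda>n. (-1) * T x n)"
  have u: "u \<in> l2" unfolding u_def using Tx by (rule l2_scale)
  have uu: "l2_inner u u = l2_inner (T x) (T x)" and Txu: "l2_inner (T x) u = - l2_inner (T x) (T x)"
    using scaled[of "-1", folded u_def] by simp_all
  have "l2_inner (S u) x = - l2_inner (T x) (T x)"
    using op_mat_pos_2_adjoint[OF pos T S B u x] Txu Im_l2_inner_self[OF Tx]
    by (simp add: complex_eq_iff)
  then have "quad_form2 (mat2 id_op T S B) u x = - l2_inner (T x) (T x) + l2_inner (B x) x"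
    using u uu Txu by (simp add: quad_form2_def id_op_apply)
  then show ?thesis using pos u x unfolding op_mat_pos_2_iff by force
qed

lemma op_mat_pos_2I_adjoint:
  assumes T: "bounded_op T"
    and adj: "\<And>x y. x \<in> l2 \<Longrightarrow> y \<in> l2 \<Longrightarrow> l2_inner (S x) y = cnj (l2_inner (T y) x)"
    and G: "\<And>x. x \<in> l2 \<Longrightarrow> Im (l2_inner (G x) x) = 0 \<and> Re (l2_inner (T x) (T x)) \<le> Re (l2_inner (G x) x)"
  shows "op_mat_pos 2 (mat2 id_op T S G)"
  unfolding op_mat_pos_2_iff
proof (intro ballI conjI)
  fix x y assume x: "x \<in> l2" and y: "y \<in> l2"
  have Ty: "T y \<in> l2" using T y by (rule bounded_op_l2)
  have q: "quad_form2 (mat2 id_op T S G) x y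
      = l2_inner x x + l2_inner (T y) x + cnj (l2_inner (T y) x) + l2_inner (G y) y"
    using x y by (simp add: quad_form2_def id_op_apply adj)
  show "Im (quad_form2 (mat2 id_op T S G) x y) = 0"
    unfolding q using G[OF y] Im_l2_inner_self[OF x] by simp
  have "0 \<le> Re (l2_inner x x) + 2 * Re (l2_inner (T y) x) + Re (l2_inner (T y) (T y))"
    using Re_l2_inner_add_self[OF x Ty] l2_inner_self_nonneg[OF l2_add[OF x Ty]] by simp
  then show "0 \<le> Re (quad_form2 (mat2 id_op T S G) x y)"
    unfolding q using G[OF y] by simp
qed

lemma op_mat_pos_2_corner:
  assumes "op_mat_pos 2 (mat2 R (\<lambda>f n. 0) (\<lambda>f n. 0) (\<lambda>f n. 0))" "x \<in> l2"
  shows "0 \<le> Re (l2_inner (R x) x)"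
  using assms zero_in_l2 unfolding op_mat_pos_2_iff by (force simp: quad_form2_def)

lemma mat_unit_abs_square_le:
  assumes "m \<noteq> 0" "x \<in> l2"
  shows "Im (l2_inner (\<lambda>n. id_op x n - mat_unit m m x n) x) = 0 \<and>
    Re (l2_inner (mat_unit 1 0 x) (mat_unit 1 0 x)) \<le> Re (l2_inner (\<lambda>n. id_op x n - mat_unit m m x n) x)"
proof -
  have "l2_inner (\<lambda>n. id_op x n - mat_unit m m x n) x = l2_inner x x - l2_inner (basis_vec m (x m)) x"
    using assms(2) l2_inner_lincomb_left[OF basis_vec_l2 assms(2) assms(2), of "-1"]
    by (simp add: id_op_apply mat_unit_apply)
  also have "\<dots> = of_real (\<Sum>n. (cmod (x n))^2) - x m * cnj (x m)"
    using assms(2) by (simp add: l2_inner_self l2_inner_basis_vec_left)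
  finally have G: "l2_inner (\<lambda>n. id_op x n - mat_unit m m x n) x
      = of_real ((\<Sum>n. (cmod (x n))^2) - (cmod (x m))^2)"
    by (simp add: complex_norm_square[symmetric])
  have T: "l2_inner (mat_unit 1 0 x) (mat_unit 1 0 x) = of_real ((cmod (x 0))^2)"
    using assms(2) by (simp add: mat_unit_apply l2_inner_basis_vec_left flip: complex_norm_square)
  show ?thesis
    unfolding G T using l2_two_coords_le[OF assms(2), of 0 m] assms(1) by simp
qed

section \<open>Unital C*-algebras\<close>

locale unital_cstar =
  fixes A :: "'a cstar_alg"
  assumes unital_cstar_algebra: "unital_cstar_algebra A"
begin

abbreviation cplus (infixl "\<oplus>" 65) where "x \<oplus> y \<equiv> add A x y"
abbreviation cminus (infixl "\<ominus>" 65) where "x \<ominus> y \<equiv> add A x (scale A (-1) y)"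
abbreviation ctimes (infixl "\<otimes>" 70) where "x \<otimes> y \<equiv> mul A x y"
abbreviation cstar ("_\<^sup>\<dagger>" [1000] 1000) where "x\<^sup>\<dagger> \<equiv> star A x"

lemmas cstar_laws = unital_cstar_algebra[unfolded unital_cstar_algebra_def]

lemma closed [simp]:
  "zero A \<in> carr A" "one A \<in> carr A"
  "x \<in> carr A \<Longrightarrow> y \<in> carr A \<Longrightarrow> x \<oplus> y \<in> carr A"
  "x \<in> carr A \<Longrightarrow> y \<in> carr A \<Longrightarrow> x \<otimes> y \<in> carr A"
  "x \<in> carr A \<Longrightarrow> scale A c x \<in> carr A"
  "x \<in> carr A \<Longrightarrow> x\<^sup>\<dagger> \<in> carr A"
  by (insert cstar_laws, simp_all)

lemma add_assoc [simp]: "x \<in> carr A \<Longrightarrow> y \<in> carr A \<Longrightarrow> z \<in> carr A \<Longrightarrow> x \<oplus> y \<oplus> z = x \<oplus> (y \<oplus> z)"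
  using cstar_laws by meson

lemma add_comm: "x \<in> carr A \<Longrightarrow> y \<in> carr A \<Longrightarrow> x \<oplus> y = y \<oplus> x"
  using cstar_laws by meson

lemma add_zero [simp]: "x \<in> carr A \<Longrightarrow> x \<oplus> zero A = x"
  using cstar_laws by meson

lemma add_neg: "x \<in> carr A \<Longrightarrow> x \<ominus> x = zero A"
  using cstar_laws by meson

lemma scale_add [simp]: "x \<in> carr A \<Longrightarrow> y \<in> carr A \<Longrightarrow> scale A c (x \<oplus> y) = scale A c x \<oplus> scale A c y"
  using cstar_laws by meson

lemma scale_one [simp]: "x \<in> carr A \<Longrightarrow> scale A 1 x = x"
  using cstar_laws by meson

lemma scale_scale [simp]: "x \<in> carr A \<Longrightarrow> scale A c (scale A d x) = scale A (c * d) x"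
  using cstar_laws by meson

lemma mul_assoc [simp]: "x \<in> carr A \<Longrightarrow> y \<in> carr A \<Longrightarrow> z \<in> carr A \<Longrightarrow> x \<otimes> y \<otimes> z = x \<otimes> (y \<otimes> z)"
  using cstar_laws by meson

lemma distrib_left [simp]: "x \<in> carr A \<Longrightarrow> y \<in> carr A \<Longrightarrow> z \<in> carr A \<Longrightarrow> x \<otimes> (y \<oplus> z) = x \<otimes> y \<oplus> x \<otimes> z"
  using cstar_laws by meson

lemma distrib_right [simp]: "x \<in> carr A \<Longrightarrow> y \<in> carr A \<Longrightarrow> z \<in> carr A \<Longrightarrow> (x \<oplus> y) \<otimes> z = x \<otimes> z \<oplus> y \<otimes> z"
  using cstar_laws by meson

lemma mul_scale_left [simp]: "x \<in> carr A \<Longrightarrow> y \<in> carr A \<Longrightarrow> scale A c x \<otimes> y = scale A c (x \<otimes> y)"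
  using cstar_laws by meson

lemma mul_scale_right [simp]: "x \<in> carr A \<Longrightarrow> y \<in> carr A \<Longrightarrow> x \<otimes> scale A c y = scale A c (x \<otimes> y)"
  using cstar_laws by meson

lemma scale_add_left: "x \<in> carr A \<Longrightarrow> scale A (c + d) x = scale A c x \<oplus> scale A d x"
  using cstar_laws by meson

lemma mul_one_right [simp]: "x \<in> carr A \<Longrightarrow> x \<otimes> one A = x"
  using cstar_laws by meson

lemma mul_one_left [simp]: "x \<in> carr A \<Longrightarrow> one A \<otimes> x = x"
  using cstar_laws by meson

lemma star_add [simp]: "x \<in> carr A \<Longrightarrow> y \<in> carr A \<Longrightarrow> (x \<oplus> y)\<^sup>\<dagger> = x\<^sup>\<dagger> \<oplus> y\<^sup>\<dagger>"
  using cstar_laws by meson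

lemma star_star [simp]: "x \<in> carr A \<Longrightarrow> x\<^sup>\<dagger>\<^sup>\<dagger> = x"
  using cstar_laws by meson

lemma star_scale [simp]: "x \<in> carr A \<Longrightarrow> (scale A c x)\<^sup>\<dagger> = scale A (cnj c) (x\<^sup>\<dagger>)"
  using cstar_laws by meson

lemma star_mul [simp]: "x \<in> carr A \<Longrightarrow> y \<in> carr A \<Longrightarrow> (x \<otimes> y)\<^sup>\<dagger> = y\<^sup>\<dagger> \<otimes> x\<^sup>\<dagger>"
  using cstar_laws by meson

lemma add_left_comm: "x \<in> carr A \<Longrightarrow> y \<in> carr A \<Longrightarrow> z \<in> carr A \<Longrightarrow> x \<oplus> (y \<oplus> z) = y \<oplus> (x \<oplus> z)"
  by (metis add_assoc add_comm)

lemma zero_add [simp]: "x \<in> carr A \<Longrightarrow> zero A \<oplus> x = x"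
  by (metis add_comm add_zero closed(1))

lemma neg_add [simp]: "x \<in> carr A \<Longrightarrow> scale A (-1) x \<oplus> x = zero A"
  by (metis add_comm add_neg closed(5))

lemma star_diff_mul_diff:
  "u \<in> carr A \<Longrightarrow> v \<in> carr A \<Longrightarrow>
    (u \<ominus> v)\<^sup>\<dagger> \<otimes> (u \<ominus> v) = u\<^sup>\<dagger> \<otimes> u \<ominus> u\<^sup>\<dagger> \<otimes> v \<ominus> v\<^sup>\<dagger> \<otimes> u \<oplus> v\<^sup>\<dagger> \<otimes> v"
  by (simp add: add_left_comm)

lemma add_interchange4:
  assumes "p \<in> carr A" "q \<in> carr A" "r \<in> carr A" "s \<in> carr A"
    and "p' \<in> carr A" "q' \<in> carr A" "r' \<in> carr A" "s' \<in> carr A"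
  shows "(p \<ominus> q \<ominus> r \<oplus> s) \<oplus> (p' \<ominus> q' \<ominus> r' \<oplus> s')
    = (p \<oplus> p') \<ominus> (q \<oplus> q') \<ominus> (r \<oplus> r') \<oplus> (s \<oplus> s')"
  using assms by (simp add: add_left_comm)

lemma add_idem_zero: "y \<in> carr A \<Longrightarrow> y \<oplus> y = y \<Longrightarrow> y = zero A"
  by (metis add_assoc add_neg add_zero closed(5))

lemma scale_zero [simp]: "x \<in> carr A \<Longrightarrow> scale A 0 x = zero A"
  by (rule add_idem_zero) (simp_all flip: scale_add_left)

lemma mul_zero_right [simp]: "x \<in> carr A \<Longrightarrow> x \<otimes> zero A = zero A"
  using mul_scale_right[of x "zero A" 0] by simp

lemma mul_zero_left [simp]: "x \<in> carr A \<Longrightarrow> zero A \<otimes> x = zero A"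
  using mul_scale_left[of "zero A" x 0] by simp

lemma star_zero [simp]: "(zero A)\<^sup>\<dagger> = zero A"
  using star_scale[of "zero A" 0] by simp

lemma star_one [simp]: "(one A)\<^sup>\<dagger> = one A"
  by (metis closed(2,6) mul_one_left star_mul star_star)

text \<open>The Schur complement of a positive 2x2 matrix with corner 1: if
  Y* Y = [[1, a], [_, g]] then g - a* a = W* W with W = (second column of Y) - (first column) a.\<close>
lemma schur_complement:
  assumes Y: "y00 \<in> carr A" "y01 \<in> carr A" "y10 \<in> carr A" "y11 \<in> carr A"
    and one: "one A = zero A \<oplus> y00\<^sup>\<dagger> \<otimes> y00 \<oplus> y10\<^sup>\<dagger> \<otimes> y10"
    and a: "a = zero A \<oplus> y00\<^sup>\<dagger> \<otimes> y01 \<oplus> y10\<^sup>\<dagger> \<otimes> y11"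
    and g: "g = zero A \<oplus> y01\<^sup>\<dagger> \<otimes> y01 \<oplus> y11\<^sup>\<dagger> \<otimes> y11"
  shows "g \<ominus> a\<^sup>\<dagger> \<otimes> a
    = zero A \<oplus> (y01 \<ominus> y00 \<otimes> a)\<^sup>\<dagger> \<otimes> (y01 \<ominus> y00 \<otimes> a) \<oplus> (y11 \<ominus> y10 \<otimes> a)\<^sup>\<dagger> \<otimes> (y11 \<ominus> y10 \<otimes> a)"
proof -
  have ca: "a \<in> carr A" and cg: "g \<in> carr A" using a g Y by simp_all
  define b where "b = a\<^sup>\<dagger> \<otimes> a"
  have cb: "b \<in> carr A" using ca by (simp add: b_def)
  have "zero A \<oplus> (y01 \<ominus> y00 \<otimes> a)\<^sup>\<dagger> \<otimes> (y01 \<ominus> y00 \<otimes> a) \<oplus> (y11 \<ominus> y10 \<otimes> a)\<^sup>\<dagger> \<otimes> (y11 \<ominus> y10 \<otimes> a)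
      = (y01\<^sup>\<dagger> \<otimes> y01 \<oplus> y11\<^sup>\<dagger> \<otimes> y11)
        \<ominus> (y01\<^sup>\<dagger> \<otimes> (y00 \<otimes> a) \<oplus> y11\<^sup>\<dagger> \<otimes> (y10 \<otimes> a))
        \<ominus> ((y00 \<otimes> a)\<^sup>\<dagger> \<otimes> y01 \<oplus> (y10 \<otimes> a)\<^sup>\<dagger> \<otimes> y11)
        \<oplus> ((y00 \<otimes> a)\<^sup>\<dagger> \<otimes> (y00 \<otimes> a) \<oplus> (y10 \<otimes> a)\<^sup>\<dagger> \<otimes> (y10 \<otimes> a))"
    using Y ca by (simp only: star_diff_mul_diff add_interchange4 zero_add closed)
  also have "y01\<^sup>\<dagger> \<otimes> y01 \<oplus> y11\<^sup>\<dagger> \<otimes> y11 = g"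
    using g Y by simp
  also have "y01\<^sup>\<dagger> \<otimes> (y00 \<otimes> a) \<oplus> y11\<^sup>\<dagger> \<otimes> (y10 \<otimes> a) = b"
  proof -
    have "a\<^sup>\<dagger> = y01\<^sup>\<dagger> \<otimes> y00 \<oplus> y11\<^sup>\<dagger> \<otimes> y10" using a Y by simp
    then show ?thesis using Y ca by (simp add: b_def)
  qed
  also have "(y00 \<otimes> a)\<^sup>\<dagger> \<otimes> y01 \<oplus> (y10 \<otimes> a)\<^sup>\<dagger> \<otimes> y11 = b"
  proof -
    have "y00\<^sup>\<dagger> \<otimes> y01 \<oplus> y10\<^sup>\<dagger> \<otimes> y11 = a" using a Y by simp
    then have "b = a\<^sup>\<dagger> \<otimes> (y00\<^sup>\<dagger> \<otimes> y01 \<oplus> y10\<^sup>\<dagger> \<otimes> y11)" by (simp add: b_def)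
    also have "\<dots> = (y00 \<otimes> a)\<^sup>\<dagger> \<otimes> y01 \<oplus> (y10 \<otimes> a)\<^sup>\<dagger> \<otimes> y11" using Y ca by simp
    finally show ?thesis ..
  qed
  also have "(y00 \<otimes> a)\<^sup>\<dagger> \<otimes> (y00 \<otimes> a) \<oplus> (y10 \<otimes> a)\<^sup>\<dagger> \<otimes> (y10 \<otimes> a) = b"
  proof -
    have "b = a\<^sup>\<dagger> \<otimes> (one A \<otimes> a)" using ca by (simp add: b_def)
    also have "\<dots> = (y00 \<otimes> a)\<^sup>\<dagger> \<otimes> (y00 \<otimes> a) \<oplus> (y10 \<otimes> a)\<^sup>\<dagger> \<otimes> (y10 \<otimes> a)"
      unfolding one using Y ca by simp
    finally show ?thesis ..
  qed
  also have "g \<ominus> b \<ominus> b \<oplus> b = g \<ominus> b"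
    using cg cb by simp
  finally show ?thesis unfolding b_def ..
qed

lemma cstar_mat_pos_2_iff:
  "cstar_mat_pos A 2 (mat2 p q r t) \<longleftrightarrow>
    (\<exists>y00 y01 y10 y11. y00 \<in> carr A \<and> y01 \<in> carr A \<and> y10 \<in> carr A \<and> y11 \<in> carr A \<and>
      p = zero A \<oplus> y00\<^sup>\<dagger> \<otimes> y00 \<oplus> y10\<^sup>\<dagger> \<otimes> y10 \<and> q = zero A \<oplus> y00\<^sup>\<dagger> \<otimes> y01 \<oplus> y10\<^sup>\<dagger> \<otimes> y11 \<and>
      r = zero A \<oplus> y01\<^sup>\<dagger> \<otimes> y00 \<oplus> y11\<^sup>\<dagger> \<otimes> y10 \<and> t = zero A \<oplus> y01\<^sup>\<dagger> \<otimes> y01 \<oplus> y11\<^sup>\<dagger> \<otimes> y11)"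
  (is "_ \<longleftrightarrow> (\<exists>y00 y01 y10 y11. ?P y00 y01 y10 y11)")
proof
  assume "cstar_mat_pos A 2 (mat2 p q r t)"
  then obtain Y where "\<forall>i<2. \<forall>j<2. Y i j \<in> carr A"
    and "\<forall>i<2. \<forall>j<2. mat2 p q r t i j = asum A (\<lambda>k. (Y k i)\<^sup>\<dagger> \<otimes> Y k j) 2"
    unfolding cstar_mat_pos_def by blast
  then have "?P (Y 0 0) (Y 0 1) (Y 1 0) (Y 1 1)"
    unfolding all_less_2 by (simp add: numeral_2_eq_2)
  then show "\<exists>y00 y01 y10 y11. ?P y00 y01 y10 y11" by blast
next
  assume "\<exists>y00 y01 y10 y11. ?P y00 y01 y10 y11"
  then obtain y00 y01 y10 y11 where "?P y00 y01 y10 y11" by blast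
  then show "cstar_mat_pos A 2 (mat2 p q r t)"
    unfolding cstar_mat_pos_def all_less_2
    by (intro exI[of _ "mat2 y00 y01 y10 y11"]) (simp add: numeral_2_eq_2)
qed

end

section \<open>No complete order isomorphism onto a C*-algebra\<close>

locale S0_realization = unital_cstar A for A :: "'a cstar_alg" +
  fixes phi :: "op \<Rightarrow> 'a"
  assumes ucoi_S0: "ucoi_S0 phi A"
begin

lemma phi_in_carr: "T \<in> S0 \<Longrightarrow> phi T \<in> carr A"
  using ucoi_S0 unfolding ucoi_S0_def by blast

lemma phi_surj: "x \<in> carr A \<Longrightarrow> \<exists>T\<in>S0. phi T = x"
  using ucoi_S0 unfolding ucoi_S0_def by (metis image_iff)

lemma phi_lincomb:
  "S \<in> S0 \<Longrightarrow> T \<in> S0 \<Longrightarrow> phi (\<lambda>f n. c * S f n + T f n) = scale A c (phi S) \<oplus> phi T"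
  using ucoi_S0 unfolding ucoi_S0_def by blast

lemma phi_id_op: "phi id_op = one A"
  using ucoi_S0 unfolding ucoi_S0_def by blast

lemma phi_zero_op: "phi (\<lambda>f n. 0) = zero A"
  using phi_lincomb[OF zero_op_in_S0 zero_op_in_S0, of "-1"] phi_in_carr[OF zero_op_in_S0]
  by (simp add: add_comm add_neg)

lemma op_mat_pos_2_iff_phi:
  assumes "p \<in> S0" "q \<in> S0" "r \<in> S0" "t \<in> S0"
  shows "op_mat_pos 2 (mat2 p q r t) \<longleftrightarrow> cstar_mat_pos A 2 (mat2 (phi p) (phi q) (phi r) (phi t))"
proof -
  have "op_mat_pos 2 X \<longleftrightarrow> cstar_mat_pos A 2 (\<lambda>i j. phi (X i j))" if "\<forall>i<2. \<forall>j<2. X i j \<in> S0" for X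
    using ucoi_S0 that unfolding ucoi_S0_def by blast
  moreover have "(\<lambda>i j. phi (mat2 p q r t i j)) = mat2 (phi p) (phi q) (phi r) (phi t)"
    by (simp add: mat2_def fun_eq_iff)
  ultimately show ?thesis using assms by (simp add: all_less_2)
qed

lemma op_mat_pos_2_of_abs_square:
  assumes T: "T \<in> S0" and S: "S \<in> S0" "phi S = (phi T)\<^sup>\<dagger>"
    and B: "B \<in> S0" "phi B = (phi T)\<^sup>\<dagger> \<otimes> phi T"
  shows "op_mat_pos 2 (mat2 id_op T S B)"
proof -
  have "phi T \<in> carr A" using T by (rule phi_in_carr)
  then have "cstar_mat_pos A 2 (mat2 (one A) (phi T) ((phi T)\<^sup>\<dagger>) ((phi T)\<^sup>\<dagger> \<otimes> phi T))"
    unfolding cstar_mat_pos_2_iff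
    by (intro exI[of _ "one A"] exI[of _ "phi T"] exI[of _ "zero A"]) simp
  then show ?thesis
    using T S B by (simp add: op_mat_pos_2_iff_phi id_op_in_S0 phi_id_op)
qed

text \<open>The preimage B of a* a is the least element of S0 dominating T* T, in the sense of 2x2
  positivity; the minimality is transported from A by the Schur complement.\<close>
lemma abs_square_preimage_le:
  assumes T: "T \<in> S0" and B: "B \<in> S0" "phi B = (phi T)\<^sup>\<dagger> \<otimes> phi T"
    and S: "S \<in> S0" and G: "G \<in> S0" and pos: "op_mat_pos 2 (mat2 id_op T S G)" and x: "x \<in> l2"
  shows "Re (l2_inner (B x) x) \<le> Re (l2_inner (G x) x)"
proof -
  define a where "a = phi T"
  have "cstar_mat_pos A 2 (mat2 (one A) a (phi S) (phi G))"
    using pos T S G by (simp add: op_mat_pos_2_iff_phi id_op_in_S0 phi_id_op a_def)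
  then obtain y00 y01 y10 y11 where Y: "y00 \<in> carr A" "y01 \<in> carr A" "y10 \<in> carr A" "y11 \<in> carr A"
    and one: "one A = zero A \<oplus> y00\<^sup>\<dagger> \<otimes> y00 \<oplus> y10\<^sup>\<dagger> \<otimes> y10"
    and ay: "a = zero A \<oplus> y00\<^sup>\<dagger> \<otimes> y01 \<oplus> y10\<^sup>\<dagger> \<otimes> y11"
    and gy: "phi G = zero A \<oplus> y01\<^sup>\<dagger> \<otimes> y01 \<oplus> y11\<^sup>\<dagger> \<otimes> y11"
    unfolding cstar_mat_pos_2_iff by blast
  define w0 where "w0 = y01 \<ominus> y00 \<otimes> a"
  define w1 where "w1 = y11 \<ominus> y10 \<otimes> a"
  have w: "w0 \<in> carr A" "w1 \<in> carr A"
    using Y phi_in_carr[OF T] by (simp_all add: w0_def w1_def a_def)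
  define R where "R = (\<lambda>f n. (-1) * B f n + G f n)"
  have R: "R \<in> S0" unfolding R_def using B(1) G by (rule S0_lincomb)
  have "phi R = phi G \<ominus> a\<^sup>\<dagger> \<otimes> a"
    unfolding R_def phi_lincomb[OF B(1) G] using B(2) phi_in_carr[OF T] phi_in_carr[OF G]
    by (simp add: a_def add_comm)
  also have "\<dots> = zero A \<oplus> w0\<^sup>\<dagger> \<otimes> w0 \<oplus> w1\<^sup>\<dagger> \<otimes> w1"
    unfolding w0_def w1_def using Y one ay gy by (rule schur_complement)
  finally have "cstar_mat_pos A 2 (mat2 (phi R) (zero A) (zero A) (zero A))"
    unfolding cstar_mat_pos_2_iff using w
    by (intro exI[of _ w0] exI[of _ "zero A"] exI[of _ w1]) simp
  then have "op_mat_pos 2 (mat2 R (\<lambda>f n. 0) (\<lambda>f n. 0) (\<lambda>f n. 0))"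
    using R by (simp add: op_mat_pos_2_iff_phi zero_op_in_S0 phi_zero_op)
  then have "0 \<le> Re (l2_inner (R x) x)" using x by (rule op_mat_pos_2_corner)
  moreover have "l2_inner (R x) x = - l2_inner (B x) x + l2_inner (G x) x"
    unfolding R_def
    using l2_inner_lincomb_left[OF bounded_op_l2[OF S0_bounded[OF B(1)] x]
        bounded_op_l2[OF S0_bounded[OF G] x] x, of "-1"]
    by simp
  ultimately show ?thesis by simp
qed

lemma realization_absurd: False
proof -
  define T where "T = mat_unit 1 0"
  have T: "T \<in> S0" by (simp add: T_def mat_unit_in_S0)
  obtain S where S: "S \<in> S0" "phi S = (phi T)\<^sup>\<dagger>"
    using phi_surj phi_in_carr[OF T] by (meson closed(6))
  obtain B where B: "B \<in> S0" "phi B = (phi T)\<^sup>\<dagger> \<otimes> phi T"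
    using phi_surj phi_in_carr[OF T] by (meson closed(4,6))
  have P: "op_mat_pos 2 (mat2 id_op T S B)"
    using T S B by (rule op_mat_pos_2_of_abs_square)
  obtain c K where K: "K \<in> K0" and B_eq: "B = (\<lambda>f n. c * id_op f n + K f n)"
    using B(1) unfolding S0_def by blast
  have B_diag: "B (basis_vec j 1) j = c + K (basis_vec j 1) j" for j
    by (simp add: B_eq id_op_apply basis_vec_l2)
  have "Re (l2_inner (T (basis_vec 0 1)) (T (basis_vec 0 1))) \<le> Re (l2_inner (B (basis_vec 0 1)) (basis_vec 0 1))"
    using P by (rule op_mat_pos_2_abs_square_le) (simp_all add: S0_bounded T S B basis_vec_l2)
  then have "1 \<le> Re c"
    by (simp add: T_def mat_unit_apply basis_vec_l2 l2_inner_basis_vec_right B_diag K0_entry_00[OF K])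
  obtain m where m: "m \<noteq> 0" "cmod (K (basis_vec m 1) m) < 1"
    using K0_small_diagonal_entry[OF K zero_less_one] by blast
  define G where "G = (\<lambda>f n. id_op f n - mat_unit m m f n)"
  have "(\<lambda>f n. (-1) * mat_unit m m f n + id_op f n) \<in> S0"
    using m(1) by (intro S0_lincomb mat_unit_in_S0 id_op_in_S0) simp
  then have G: "G \<in> S0" by (simp add: G_def)
  have adj: "l2_inner (S x) y = cnj (l2_inner (T y) x)" if "x \<in> l2" "y \<in> l2" for x y
    using P S0_bounded[OF T] S0_bounded[OF S(1)] S0_bounded[OF B(1)] that
    by (rule op_mat_pos_2_adjoint)
  have "op_mat_pos 2 (mat2 id_op T S G)"
    using S0_bounded[OF T] adj mat_unit_abs_square_le[OF m(1)]
    unfolding G_def T_def by (rule op_mat_pos_2I_adjoint)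
  then have "Re (l2_inner (B (basis_vec m 1)) (basis_vec m 1)) \<le> Re (l2_inner (G (basis_vec m 1)) (basis_vec m 1))"
    by (rule abs_square_preimage_le[OF T B S(1) G _ basis_vec_l2])
  then have "Re c + Re (K (basis_vec m 1) m) \<le> 0"
    by (simp add: G_def id_op_apply mat_unit_apply basis_vec_l2 l2_inner_basis_vec_right B_diag)
  moreover have "\<bar>Re (K (basis_vec m 1) m)\<bar> < 1"
    using m(2) abs_Re_le_cmod by (rule le_less_trans[rotated])
  ultimately show False using \<open>1 \<le> Re c\<close> by linarith
qed

end

theorem theorem4p2:
  fixes A :: "'a cstar_alg"
  assumes "unital_cstar_algebra A"
  shows "\<not> (\<exists>phi. ucoi_S0 phi A)"
proof
  assume "\<exists>phi. ucoi_S0 phi A"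
  then obtain phi where "ucoi_S0 phi A" by blast
  with assms interpret S0_realization A phi by unfold_locales
  show False by (rule realization_absurd)
qed

end
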